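(* Let $q$ be a prime power with $q\equiv 3\pmod 4$ and $q=2m+1$. Let $a,b\in D_1^2$ with $ab=1$, and let $M=\begin{pmatrix}1&a\\ b&1\end{pmatrix}$. Then the $2\times 2$ block matrix whose $(i,j)$ block is $C_{M_{ij}}$ (that is, $\begin{pmatrix}C_1&C_a\\ C_b&C_1\end{pmatrix}$) is the adjacency matrix of a directed strongly regular graph with parameters $(2(2m+1),\ 2m,\ m,\ m-1,\ m)$.
   Context: Fix a primitive element $\gamma$ of $\mathbb{F}_q$; $D_i^e=\gamma^i\langle\gamma^e\rangle$ ($e\mid q-1$) are the cyclotomic classes, here with $e=2$ ($D_1^2$ = quadratic nonresidues). For $\sigma\in\mathbb{F}_q^*$, $C_\sigma$ is the $q\times q$ $0$-$1$ matrix with rows and columns indexed by $\mathbb{F}_q$ and $(C_\sigma)_{x,y}=1$ iff $x\in\sigma y+D_0^e$. A directed strongly regular graph with parameters $(v,k,t,\lambda,\mu)$ is a digraph (no loops, no multiple arcs) on $v$ vertices whose adjacency matrix $A$ satisfies $A^2=tI+\lambda A+\mu(J-I-A)$ and $AJ=JA=kJ$. *)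

theory Defs
  imports Main
begin

text \<open>Finite field F_q is modelled as a type 'a :: {finite, field}; q = CARD('a).\<close>

definition primitive_elem :: "'a::{finite,field} \<Rightarrow> bool" where
  "primitive_elem g \<longleftrightarrow> {g ^ k | k. True} = UNIV - {0}"

text \<open>Cyclotomic class D_i^e = gamma^i <gamma^e>.\<close>
definition cyc_class :: "'a::{finite,field} \<Rightarrow> nat \<Rightarrow> nat \<Rightarrow> 'a set" where
  "cyc_class g e i = {g ^ i * (g ^ e) ^ k | k. True}"

definition Cmat :: "'a::{finite,field} \<Rightarrow> nat \<Rightarrow> 'a \<Rightarrow> 'a \<Rightarrow> 'a \<Rightarrow> int" where
  "Cmat g e \<sigma> x y = (if x - \<sigma> * y \<in> cyc_class g e 0 then 1 else 0)"

text \<open>Block matrix with (i,j) block C_{M i j}; block index False = first, True = second.\<close>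
definition block_Cmat :: "'a::{finite,field} \<Rightarrow> nat \<Rightarrow> (bool \<Rightarrow> bool \<Rightarrow> 'a)
    \<Rightarrow> bool \<times> 'a \<Rightarrow> bool \<times> 'a \<Rightarrow> int" where
  "block_Cmat g e M u w = Cmat g e (M (fst u) (fst w)) (snd u) (snd w)"

definition is_dsrg :: "('v::finite \<Rightarrow> 'v \<Rightarrow> int) \<Rightarrow> nat \<Rightarrow> nat \<Rightarrow> nat \<Rightarrow> nat \<Rightarrow> nat \<Rightarrow> bool" where
  "is_dsrg A v k t lam mu \<longleftrightarrow>
     card (UNIV :: 'v set) = v \<and>
     (\<forall>x y. A x y \<in> {0, 1}) \<and>
     (\<forall>x. A x x = 0) \<and>
     (\<forall>x y. (\<Sum>z\<in>UNIV. A x z * A z y) =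
        int t * (if x = y then 1 else 0) + int lam * A x y
        + int mu * (1 - (if x = y then 1 else 0) - A x y)) \<and>
     (\<forall>x. (\<Sum>y\<in>UNIV. A x y) = int k) \<and>
     (\<forall>y. (\<Sum>x\<in>UNIV. A x y) = int k)"

end

theory Submission
  imports Defs
begin

(*
  Let S and N be the nonzero squares and nonsquares of F_q, so |S| = |N| = m and the (x, y)
  entry of C_\<sigma> is [x - \<sigma> y \<in> S]. Every block of A\<^sup>2 has the form C_1 C_k + C_\<sigma> C_\<tau> with
  \<sigma> \<in> N and \<sigma> \<tau> = k the label of that block. Substituting w = \<sigma> z in C_\<sigma> C_\<tau> turns the
  condition z - \<tau> y \<in> S into w - k y \<in> N, so the two products together count the w with
  x - w \<in> S and w \<noteq> k y, that is m - [x - k y \<in> S]. Hence A\<^sup>2 = m J - A, the defining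
  equation with t = \<mu> = m and \<lambda> = m - 1.
*)

lemma of_nat_card_UNIV: "of_nat (card (UNIV :: 'a set)) = (0 :: 'a :: {finite, ring_1})"
proof -
  have "(\<Sum>x\<in>UNIV. x + 1) = (\<Sum>x\<in>(UNIV :: 'a set). x)"
    by (rule sum.reindex_bij_betw, rule bij_betw_byWitness[where f' = "\<lambda>x. x - 1"]) auto
  then show ?thesis
    by (simp add: sum.distrib)
qed

lemma two_neq_zero_if_odd_card:
  assumes "odd (card (UNIV :: 'a set))"
  shows "(2 :: 'a :: {finite, ring_1}) \<noteq> 0"
proof
  assume two: "(2 :: 'a) = 0"
  obtain k where "card (UNIV :: 'a set) = 2 * k + 1"
    using assms oddE by blast
  then have "(0 :: 'a) = 2 * of_nat k + 1"
    using of_nat_card_UNIV[where 'a = 'a] by (simp add: add.commute)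
  then show False
    using two by simp
qed

lemma nonzero_squares_neq_nonzero:
  assumes "(2 :: 'a :: {finite, field}) \<noteq> 0"
  shows "(\<lambda>y. y * y) ` (UNIV - {0}) \<noteq> (UNIV - {0 :: 'a})"
proof
  assume "(\<lambda>y. y * y) ` (UNIV - {0}) = (UNIV - {0 :: 'a})"
  then have "inj_on (\<lambda>y. y * y) (UNIV - {0 :: 'a})"
    by (intro finite_surj_inj) auto
  then have "(1 :: 'a) = -1"
    by (rule inj_onD[where x = 1 and y = "-1"]) (simp, simp, simp)
  then have "(1 :: 'a) + 1 = 0"
    by (rule eq_neg_iff_add_eq_0[THEN iffD1])
  with assms show False
    by (simp only: one_add_one)
qed

lemma square_if_odd_power_eq_one:
  assumes "g ^ d = (1 :: 'a :: comm_monoid_mult)" and "odd d"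
  shows "\<exists>h. g = h * h"
proof
  have "g = g ^ (d + 1)"
    using assms(1) by simp
  also have "d + 1 = 2 * ((d + 1) div 2)"
    using assms(2) by presburger
  finally show "g = g ^ ((d + 1) div 2) * g ^ ((d + 1) div 2)"
    by (simp only: mult_2 power_add)
qed

lemma cyc_class_2_0: "cyc_class g 2 0 = {g ^ (2 * k) | k. True}"
  unfolding cyc_class_def by (simp add: power_mult)

lemma cyc_class_2_1: "cyc_class g 2 1 = {g ^ (2 * k + 1) | k. True}"
proof -
  have "g ^ 1 * (g ^ 2) ^ k = g ^ (2 * k + 1)" for k
    by (metis power_add power_mult add.commute)
  then show ?thesis
    unfolding cyc_class_def by (simp only:)
qed

lemma primitive_elem_nonzero:
  assumes "primitive_elem g"
  shows "g \<noteq> 0"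
proof -
  have "g \<in> {g ^ k | k. True}"
    by (metis (mono_tags) mem_Collect_eq power_one_right)
  then show ?thesis
    using assms unfolding primitive_elem_def by blast
qed

lemma primitive_elem_powers:
  assumes "primitive_elem g" and "x \<noteq> 0"
  obtains n where "x = g ^ n"
proof -
  have "x \<in> {g ^ k | k. True}"
    using assms unfolding primitive_elem_def by simp
  then show ?thesis
    using that by blast
qed

lemma zero_notin_cyc_class: "primitive_elem g \<Longrightarrow> 0 \<notin> cyc_class g e i"
  unfolding cyc_class_def by (simp add: primitive_elem_nonzero)

lemma Cmat_eq_of_bool: "Cmat g e \<sigma> x y = of_bool (x - \<sigma> * y \<in> cyc_class g e 0)"
  unfolding Cmat_def by simp

lemma sum_of_bool_bij_in:
  fixes f :: "'a :: finite \<Rightarrow> 'a"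
  assumes "bij f"
  shows "(\<Sum>z\<in>UNIV. of_bool (f z \<in> A)) = (of_nat (card A) :: 'b :: semiring_1)"
  using sum.reindex_bij_betw[OF assms, of "\<lambda>w. of_bool (w \<in> A) :: 'b"] by simp

lemma Cmat_row_sum:
  assumes "\<sigma> \<noteq> 0"
  shows "(\<Sum>y\<in>UNIV. Cmat g e \<sigma> x y) = int (card (cyc_class g e 0))"
proof -
  have "bij (\<lambda>y. x - \<sigma> * y)"
    by (rule bij_betw_byWitness[where f' = "\<lambda>w. inverse \<sigma> * (x - w)"])
      (use assms in \<open>auto simp: field_simps\<close>)
  then show ?thesis
    unfolding Cmat_eq_of_bool by (rule sum_of_bool_bij_in)
qed

lemma Cmat_column_sum: "(\<Sum>x\<in>UNIV. Cmat g e \<sigma> x y) = int (card (cyc_class g e 0))"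
proof -
  have "bij (\<lambda>x. x - \<sigma> * y)"
    by (rule bij_betw_byWitness[where f' = "\<lambda>w. w + \<sigma> * y"]) auto
  then show ?thesis
    unfolding Cmat_eq_of_bool by (rule sum_of_bool_bij_in)
qed

lemma squares_mult_nonsquares:
  assumes "x \<in> cyc_class g 2 0" and "y \<in> cyc_class g 2 1"
  shows "x * y \<in> cyc_class g 2 1"
proof -
  obtain i j where "x = g ^ (2 * i)" and "y = g ^ (2 * j + 1)"
    using assms unfolding cyc_class_2_0 cyc_class_2_1 by blast
  then have "x * y = g ^ (2 * (i + j) + 1)"
    by (simp add: power_add add_mult_distrib2)
  then show ?thesis
    unfolding cyc_class_2_1 by blast
qed

lemma nonsquares_mult_nonsquares:
  assumes "x \<in> cyc_class g 2 1" and "y \<in> cyc_class g 2 1"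
  shows "x * y \<in> cyc_class g 2 0"
proof -
  obtain i j where "x = g ^ (2 * i + 1)" and "y = g ^ (2 * j + 1)"
    using assms unfolding cyc_class_2_1 by blast
  then have "x * y = g ^ (2 * (i + j + 1))"
    by (simp add: power_add add_mult_distrib2 mult_ac)
  then show ?thesis
    unfolding cyc_class_2_0 by blast
qed

lemma sum_UNIV_bool_prod:
  fixes f :: "bool \<times> 'a :: finite \<Rightarrow> 'b :: comm_monoid_add"
  shows "(\<Sum>u\<in>UNIV. f u) = (\<Sum>z\<in>UNIV. f (False, z)) + (\<Sum>z\<in>UNIV. f (True, z))"
proof -
  have "(\<Sum>u\<in>UNIV. f u) = (\<Sum>i\<in>UNIV. \<Sum>z\<in>UNIV. f (i, z))"
    by (simp add: sum.cartesian_product flip: UNIV_Times_UNIV)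
  then show ?thesis
    by (simp add: UNIV_bool)
qed

lemma block_Cmat_row_sum:
  assumes "\<And>i j. M i j \<noteq> 0"
  shows "(\<Sum>w\<in>UNIV. block_Cmat g e M u w) = 2 * int (card (cyc_class g e 0))"
  by (simp add: sum_UNIV_bool_prod block_Cmat_def Cmat_row_sum assms)

lemma block_Cmat_column_sum:
  "(\<Sum>u\<in>UNIV. block_Cmat g e M u w) = 2 * int (card (cyc_class g e 0))"
  by (simp add: sum_UNIV_bool_prod block_Cmat_def Cmat_column_sum)

lemma block_Cmat_diagonal:
  assumes "primitive_elem g" and "M (fst u) (fst u) = 1"
  shows "block_Cmat g e M u u = 0"
  using assms zero_notin_cyc_class by (simp add: block_Cmat_def Cmat_def)

lemma is_dsrg_if_square_eq_J_minus:
  fixes A :: "'v :: finite \<Rightarrow> 'v \<Rightarrow> int"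
  assumes "card (UNIV :: 'v set) = v" and "\<And>x y. A x y \<in> {0, 1}" and "\<And>x. A x x = 0"
    and "\<And>x y. (\<Sum>z\<in>UNIV. A x z * A z y) = int \<mu> - A x y"
    and "\<And>x. (\<Sum>y\<in>UNIV. A x y) = int k" and "\<And>y. (\<Sum>x\<in>UNIV. A x y) = int k"
    and "1 \<le> \<mu>"
  shows "is_dsrg A v k \<mu> (\<mu> - 1) \<mu>"
  unfolding is_dsrg_def using assms by (simp add: of_nat_diff algebra_simps)

locale quadratic_classes =
  fixes g :: "'a :: {finite, field}" and m :: nat
  assumes primitive: "primitive_elem g"
    and card_field: "card (UNIV :: 'a set) = 2 * m + 1"
begin

abbreviation squares :: "'a set" where "squares \<equiv> cyc_class g 2 0"
abbreviation nonsquares :: "'a set" where "nonsquares \<equiv> cyc_class g 2 1"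

lemma m_pos: "1 \<le> m"
proof -
  have "card {0, 1 :: 'a} \<le> card (UNIV :: 'a set)"
    by (rule card_mono) auto
  then show ?thesis
    using card_field by simp
qed

lemma nonzero_in_squares_or_nonsquares:
  assumes "x \<noteq> 0"
  shows "x \<in> squares \<or> x \<in> nonsquares"
proof -
  obtain n where n: "x = g ^ n"
    using primitive_elem_powers[OF primitive assms] .
  show ?thesis
  proof (cases "even n")
    case True
    then show ?thesis
      unfolding cyc_class_2_0 using n by blast
  next
    case False
    then show ?thesis
      unfolding cyc_class_2_1 using n oddE by blast
  qed
qed

lemma squares_disjoint_nonsquares: "squares \<inter> nonsquares = {}"
proof (rule ccontr)
  assume "squares \<inter> nonsquares \<noteq> {}"
  then obtain i j where ij: "g ^ (2 * i) = g ^ (2 * j + 1)"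
    unfolding cyc_class_2_0 cyc_class_2_1 by auto
  have "\<exists>d. odd d \<and> g ^ d = 1"
  proof (cases "2 * i \<le> 2 * j + 1")
    case True
    then have "g ^ (2 * j + 1 - 2 * i) = 1"
      using ij primitive_elem_nonzero[OF primitive] by (simp add: power_diff)
    moreover have "odd (2 * j + 1 - 2 * i)"
      using True by presburger
    ultimately show ?thesis by blast
  next
    case False
    then have "g ^ (2 * i - (2 * j + 1)) = 1"
      using ij primitive_elem_nonzero[OF primitive] by (simp add: power_diff)
    moreover have "odd (2 * i - (2 * j + 1))"
      using False by presburger
    ultimately show ?thesis by blast
  qed
  then obtain h where h: "g = h * h"
    by (metis square_if_odd_power_eq_one)
  \<comment> \<open>then every nonzero element \<open>g ^ n = (h ^ n)\<^sup>2\<close> would be a square\<close>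
  have "UNIV - {0} \<subseteq> (\<lambda>y. y * y) ` (UNIV - {0 :: 'a})"
  proof
    fix x :: 'a
    assume "x \<in> UNIV - {0}"
    then obtain n where "x = g ^ n"
      using primitive_elem_powers[OF primitive] by blast
    then have "x = h ^ n * h ^ n"
      using h by (simp add: power_mult_distrib)
    moreover have "h ^ n \<noteq> 0"
      using h primitive_elem_nonzero[OF primitive] by auto
    ultimately show "x \<in> (\<lambda>y. y * y) ` (UNIV - {0})"
      by blast
  qed
  then have "(\<lambda>y. y * y) ` (UNIV - {0}) = (UNIV - {0 :: 'a})"
    by auto
  moreover have "(2 :: 'a) \<noteq> 0"
    using card_field by (intro two_neq_zero_if_odd_card) simp
  ultimately show False
    using nonzero_squares_neq_nonzero by blast
qed

lemma card_squares: "card squares = m"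
proof -
  have "bij_betw (\<lambda>x. g * x) squares nonsquares"
    unfolding bij_betw_def inj_on_def cyc_class_2_0 cyc_class_2_1
    using primitive_elem_nonzero[OF primitive] by (auto simp: image_iff)
  then have "card nonsquares = card squares"
    by (simp add: bij_betw_same_card)
  moreover have "squares \<union> nonsquares = UNIV - {0}"
    using nonzero_in_squares_or_nonsquares zero_notin_cyc_class[OF primitive] by blast
  then have "card squares + card nonsquares = card (UNIV - {0 :: 'a})"
    using card_Un_disjoint[OF finite finite squares_disjoint_nonsquares] by simp
  ultimately show ?thesis
    using card_field by (simp add: card_Diff_singleton)
qed

lemma nonsquare_mult_in_nonsquares_iff:
  assumes "n \<in> nonsquares"
  shows "n * u \<in> nonsquares \<longleftrightarrow> u \<in> squares"
proof
  assume nu: "n * u \<in> nonsquares"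
  have "u \<noteq> 0"
    using nu zero_notin_cyc_class[OF primitive] by auto
  moreover have "u \<notin> nonsquares"
  proof
    assume "u \<in> nonsquares"
    then have "n * u \<in> squares"
      using assms nonsquares_mult_nonsquares by blast
    then show False
      using nu squares_disjoint_nonsquares by blast
  qed
  ultimately show "u \<in> squares"
    using nonzero_in_squares_or_nonsquares by blast
next
  assume "u \<in> squares"
  then show "n * u \<in> nonsquares"
    using assms squares_mult_nonsquares by (metis mult.commute)
qed

lemma of_bool_squares_plus_nonsquares:
  "of_bool (u \<in> squares) + of_bool (u \<in> nonsquares) = (1 :: int) - of_bool (u = 0)"
  using nonzero_in_squares_or_nonsquares[of u] squares_disjoint_nonsquares
    zero_notin_cyc_class[OF primitive] by auto

lemma Cmat_product_pair:
  assumes \<sigma>: "\<sigma> \<in> nonsquares" and k: "\<sigma> * \<tau> = k"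
  shows "(\<Sum>z\<in>UNIV. Cmat g 2 1 x z * Cmat g 2 k z y) + (\<Sum>z\<in>UNIV. Cmat g 2 \<sigma> x z * Cmat g 2 \<tau> z y)
    = int m - Cmat g 2 k x y"
proof -
  define P where "P w = (of_bool (x - w \<in> squares) :: int)" for w
  have \<sigma>0: "\<sigma> \<noteq> 0"
    using \<sigma> zero_notin_cyc_class[OF primitive] by auto
  have "bij (\<lambda>z. \<sigma> * z)"
    by (rule bij_betw_byWitness[where f' = "\<lambda>w. inverse \<sigma> * w"]) (use \<sigma>0 in auto)
  \<comment> \<open>substituting \<open>w = \<sigma> z\<close> turns the second factor into \<open>w - k y \<in> nonsquares\<close>\<close>
  then have "(\<Sum>z\<in>UNIV. Cmat g 2 \<sigma> x z * Cmat g 2 \<tau> z y)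
      = (\<Sum>z\<in>UNIV. P (\<sigma> * z) * of_bool (\<sigma> * (z - \<tau> * y) \<in> nonsquares))"
    unfolding Cmat_eq_of_bool P_def nonsquare_mult_in_nonsquares_iff[OF \<sigma>] by simp
  also have "\<dots> = (\<Sum>w\<in>UNIV. P w * of_bool (w - k * y \<in> nonsquares))"
    using sum.reindex_bij_betw[OF \<open>bij (\<lambda>z. \<sigma> * z)\<close>,
        of "\<lambda>w. P w * of_bool (w - k * y \<in> nonsquares)"]
    by (simp add: k[symmetric] right_diff_distrib mult.assoc)
  finally have "(\<Sum>z\<in>UNIV. Cmat g 2 1 x z * Cmat g 2 k z y) + (\<Sum>z\<in>UNIV. Cmat g 2 \<sigma> x z * Cmat g 2 \<tau> z y)
      = (\<Sum>w\<in>UNIV. P w * (of_bool (w - k * y \<in> squares) + of_bool (w - k * y \<in> nonsquares)))"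
    by (simp add: Cmat_eq_of_bool P_def distrib_left sum.distrib)
  also have "\<dots> = (\<Sum>w\<in>UNIV. P w) - P (k * y)"
    unfolding of_bool_squares_plus_nonsquares by (simp add: right_diff_distrib sum_subtractf)
  also have "(\<Sum>w\<in>UNIV. P w) = int m"
    using Cmat_row_sum[of 1 g 2 x] card_squares by (simp add: Cmat_eq_of_bool P_def)
  finally show ?thesis
    by (simp add: Cmat_eq_of_bool P_def)
qed

lemma block_Cmat_square:
  assumes "a \<in> nonsquares" and "b \<in> nonsquares" and "a * b = 1"
  defines "M \<equiv> \<lambda>i j. if i = j then 1 else if \<not> i then a else b"
  shows "(\<Sum>v\<in>UNIV. block_Cmat g 2 M u v * block_Cmat g 2 M v w) = int m - block_Cmat g 2 M u w"
proof -
  obtain i x j y where "u = (i, x)" and "w = (j, y)"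
    by fastforce
  moreover have "b * a = 1"
    using assms(3) by (simp add: mult.commute)
  ultimately show ?thesis
    using Cmat_product_pair[OF assms(1) assms(3)] Cmat_product_pair[OF assms(1) mult_1_right]
      Cmat_product_pair[OF assms(2) \<open>b * a = 1\<close>] Cmat_product_pair[OF assms(2) mult_1_right]
    by (cases i; cases j) (simp_all add: sum_UNIV_bool_prod block_Cmat_def M_def add.commute)
qed

end

theorem mainTheorem8:
  fixes \<gamma> a b :: "'a::{finite,field}" and m :: nat
  assumes "primitive_elem \<gamma>"
    and "card (UNIV :: 'a set) mod 4 = 3"
    and "card (UNIV :: 'a set) = 2 * m + 1"
    and "a \<in> cyc_class \<gamma> 2 1" and "b \<in> cyc_class \<gamma> 2 1"
    and "a * b = 1"
  shows "is_dsrg (block_Cmat \<gamma> 2 (\<lambda>i j. if i = j then 1 else if \<not> i then a else b))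
           (2 * (2 * m + 1)) (2 * m) m (m - 1) m"
proof -
  interpret quadratic_classes \<gamma> m
    using assms(1,3) by unfold_locales
  have a0: "a \<noteq> 0" and b0: "b \<noteq> 0"
    using assms(4,5) zero_notin_cyc_class[OF assms(1)] by auto
  show ?thesis
  proof (rule is_dsrg_if_square_eq_J_minus)
    show "card (UNIV :: (bool \<times> 'a) set) = 2 * (2 * m + 1)"
      using assms(3) by (simp add: card_cartesian_product flip: UNIV_Times_UNIV)
  next
    show "block_Cmat \<gamma> 2 M u w \<in> {0, 1}" for M u w
      by (simp add: block_Cmat_def Cmat_def)
  qed (use m_pos in \<open>simp_all add: block_Cmat_diagonal[OF assms(1)] block_Cmat_row_sum
      block_Cmat_column_sum card_squares block_Cmat_square[OF assms(4-6)] a0 b0\<close>)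
qed

end
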